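(* Let $L,p,q$ be positive integers with $p\ge 2$ and $p+q\le L$. For any $\varepsilon>0$ there exists a $(p,q)$-cliff sequence $\mathbf{l}\in\mathbb{R}^L$ (of some norm $C>0$) such that $\mathrm{softmax}(\mathbf{l})_i\le\varepsilon$ for every $i\in[1,p-1]\cup[p+q+1,L]$.
   Context: A sequence $\mathbf{l}=(\mathbf{l}_1,\dots,\mathbf{l}_L)\in\mathbb{R}^L$ is called a $(p,q)$-cliff sequence if: (1) (increasing segment) $\mathbf{l}_{i+1}>\mathbf{l}_i$ for all $i<p$; (2) (plateau) $\frac{\mathbf{l}_{p-1}+\mathbf{l}_p}{2}\le\mathbf{l}_j\le\mathbf{l}_p$ for all $j\in\{p+1,\dots,p+q\}$; (3) (descending segment) $\mathbf{l}_i<\mathbf{l}_1$ for all $p+q<i\le L$. Here $\mathrm{softmax}(\mathbf{l})_i=e^{\mathbf{l}_i}/\sum_{k=1}^L e^{\mathbf{l}_k}$. *)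

theory Defs
  imports Complex_Main
begin

text \<open>Sequences l = (l_1,...,l_L) in R^L are represented as functions nat => real,
  only the values at indices 1..L being relevant.\<close>

definition cliff_seq :: "nat \<Rightarrow> nat \<Rightarrow> nat \<Rightarrow> (nat \<Rightarrow> real) \<Rightarrow> bool" where
  "cliff_seq L p q l \<longleftrightarrow>
     (\<forall>i. 1 \<le> i \<and> i < p \<longrightarrow> l (i + 1) > l i) \<and>
     (\<forall>j\<in>{p+1..p+q}. (l (p - 1) + l p) / 2 \<le> l j \<and> l j \<le> l p) \<and>
     (\<forall>i. p + q < i \<and> i \<le> L \<longrightarrow> l i < l 1)"

definition softmax :: "nat \<Rightarrow> (nat \<Rightarrow> real) \<Rightarrow> nat \<Rightarrow> real" where
  "softmax L l i = exp (l i) / (\<Sum>k=1..L. exp (l k))"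

definition seq_norm :: "nat \<Rightarrow> (nat \<Rightarrow> real) \<Rightarrow> real" where
  "seq_norm L l = sqrt (\<Sum>k=1..L. (l k)\<^sup>2)"

end

theory Submission
  imports Defs
begin

text \<open>Take the sequence rising with slope \<open>M\<close> up to index \<open>p\<close>, constant on the plateau and zero
  afterwards. Every index off the plateau lies at least \<open>M\<close> below the peak \<open>l p\<close>, so its softmax
  weight is at most \<open>exp (- M)\<close>, which is below \<open>\<epsilon>\<close> once \<open>M \<ge> - ln \<epsilon>\<close>.\<close>

definition ramp_plateau :: "nat \<Rightarrow> nat \<Rightarrow> real \<Rightarrow> nat \<Rightarrow> real" where
  "ramp_plateau p q M i = (if i \<le> p then M * real i else if i \<le> p + q then M * real p else 0)"

lemma cliff_seq_ramp_plateau: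
  assumes "M > 0" "p \<ge> 1"
  shows "cliff_seq L p q (ramp_plateau p q M)"
  unfolding cliff_seq_def
proof (intro conjI allI impI ballI)
  fix i assume "1 \<le> i \<and> i < p"
  then show "ramp_plateau p q M (i + 1) > ramp_plateau p q M i"
    using assms by (auto simp: ramp_plateau_def)
next
  fix j assume "j \<in> {p+1..p+q}"
  moreover have "real (p - 1) = real p - 1"
    using assms(2) by simp
  ultimately show "(ramp_plateau p q M (p - 1) + ramp_plateau p q M p) / 2 \<le> ramp_plateau p q M j"
    and "ramp_plateau p q M j \<le> ramp_plateau p q M p"
    using assms by (auto simp: ramp_plateau_def)
next
  fix i assume "p + q < i \<and> i \<le> L"
  then show "ramp_plateau p q M i < ramp_plateau p q M 1"
    using assms by (auto simp: ramp_plateau_def)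
qed

lemma ramp_plateau_gap:
  assumes "M > 0" "p \<ge> 1" "i \<le> p - 1 \<or> i > p + q"
  shows "ramp_plateau p q M i \<le> ramp_plateau p q M p - M"
  using assms(3)
proof
  assume "i \<le> p - 1"
  then have "M * real i \<le> M * (real p - 1)"
    using assms(1,2) by (intro mult_left_mono) auto
  moreover have "i \<le> p"
    using \<open>i \<le> p - 1\<close> by simp
  ultimately show ?thesis
    by (simp add: ramp_plateau_def algebra_simps)
next
  assume "i > p + q"
  moreover have "M * 1 \<le> M * real p"
    using assms(1,2) by (intro mult_left_mono) auto
  ultimately show ?thesis
    by (simp add: ramp_plateau_def)
qed

lemma softmax_le_exp_diff:
  assumes "k \<in> {1..L}"
  shows "softmax L l i \<le> exp (l i - l k)"
proof -
  have "exp (l k) \<le> (\<Sum>j=1..L. exp (l j))"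
    using assms by (intro member_le_sum) auto
  moreover have "0 < (\<Sum>j=1..L. exp (l j))"
    using assms by (intro sum_pos) auto
  ultimately have "exp (l i) / (\<Sum>j=1..L. exp (l j)) \<le> exp (l i) / exp (l k)"
    by (intro divide_left_mono mult_pos_pos) auto
  then show ?thesis
    by (simp add: softmax_def exp_diff)
qed

lemma seq_norm_pos:
  assumes "k \<in> {1..L}" "l k \<noteq> 0"
  shows "seq_norm L l > 0"
proof -
  have "0 < (l k)\<^sup>2"
    using assms(2) by simp
  also have "\<dots> \<le> (\<Sum>j=1..L. (l j)\<^sup>2)"
    using assms(1) by (intro member_le_sum) auto
  finally show ?thesis
    unfolding seq_norm_def by simp
qed

theorem lemmaE5:
  fixes L p q :: nat and \<epsilon> :: real
  assumes "L > 0" "p \<ge> 2" "q > 0" "p + q \<le> L" "\<epsilon> > 0"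
  shows "\<exists>l :: nat \<Rightarrow> real. cliff_seq L p q l \<and> seq_norm L l > 0 \<and>
           (\<forall>i \<in> {1..p-1} \<union> {p+q+1..L}. softmax L l i \<le> \<epsilon>)"
proof -
  define M :: real where "M = 1 + \<bar>ln \<epsilon>\<bar>"
  define l where "l = ramp_plateau p q M"
  have "M > 0" "p \<ge> 1" "p \<in> {1..L}"
    using assms by (auto simp: M_def)
  have "softmax L l i \<le> \<epsilon>" if "i \<in> {1..p-1} \<union> {p+q+1..L}" for i
  proof -
    have "softmax L l i \<le> exp (l i - l p)"
      using \<open>p \<in> {1..L}\<close> by (rule softmax_le_exp_diff)
    also have "\<dots> \<le> exp (- M)"
      using ramp_plateau_gap[OF \<open>M > 0\<close> \<open>p \<ge> 1\<close>, of i q] that by (auto simp: l_def)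
    also have "\<dots> \<le> exp (ln \<epsilon>)"
      unfolding M_def exp_le_cancel_iff by simp
    also have "\<dots> = \<epsilon>"
      using assms(5) by simp
    finally show ?thesis .
  qed
  moreover have "seq_norm L l > 0"
    using \<open>p \<in> {1..L}\<close> \<open>M > 0\<close> \<open>p \<ge> 1\<close> by (intro seq_norm_pos) (auto simp: l_def ramp_plateau_def)
  ultimately show ?thesis
    using cliff_seq_ramp_plateau[OF \<open>M > 0\<close> \<open>p \<ge> 1\<close>] unfolding l_def by blast
qed

end
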